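(* Fix $\alpha\in(0,1/2]$ and let $a,n$ be positive integers with $n\ge \max\{1000(\log(a)+1)/\alpha,\ a+1\}$ (natural logarithm). Then there is a bipartite graph $G$ with parts $A$ and $B$, $|A|=a$, $|B|=n$, such that: (a) every $x\in A$ has degree exactly $\lfloor \alpha n\rfloor$; (b) for every $\delta\in(0,1]$ with $\delta\ge 10a^{-1/3}\alpha^{-1}$, and every subgraph $H$ of $G$ with at least $\alpha\delta a n$ edges, there exist $A'\subseteq A$ and $B'\subseteq B$ with $|A'|\le 1/\alpha$ and $|B'|\ge \delta n/16$ such that the induced subgraph $H[A'\cup B']$ has diameter at most $6$.
   Context: All graphs are finite and simple. The diameter of a graph is the maximum distance between two of its vertices (in particular the graph is connected). *)

theory Defs
  imports Complex_Main
begin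

text \<open>A bipartite graph with parts A and B is represented by its edge set
  E \<subseteq> A \<times> B (type nat \<times> nat); its vertex set is the disjoint union of A and B,
  encoded as Inl ` A \<union> Inr ` B.\<close>

definition badj :: "(nat \<times> nat) set \<Rightarrow> nat + nat \<Rightarrow> nat + nat \<Rightarrow> bool" where
  "badj F u v \<longleftrightarrow> (\<exists>x y. (x, y) \<in> F \<and>
      ((u = Inl x \<and> v = Inr y) \<or> (u = Inr y \<and> v = Inl x)))"

text \<open>There is a walk of length at most k from u to v all of whose vertices lie in S
  (i.e. distance at most k in the subgraph induced on S).\<close>

definition dist_le_in :: "(nat \<times> nat) set \<Rightarrow> (nat + nat) set \<Rightarrow> nat \<Rightarrow> nat + nat \<Rightarrow> nat + nat \<Rightarrow> bool" where
  "dist_le_in F S k u v \<longleftrightarrow> (\<exists>p. p \<noteq> [] \<and> length p \<le> k + 1 \<and> hd p = u \<and> last p = v \<and>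
      set p \<subseteq> S \<and> (\<forall>i. i + 1 < length p \<longrightarrow> badj F (p ! i) (p ! (i + 1))))"

definition induced_diam_le :: "(nat \<times> nat) set \<Rightarrow> nat set \<Rightarrow> nat set \<Rightarrow> nat \<Rightarrow> bool" where
  "induced_diam_le F A' B' k \<longleftrightarrow>
     (let S = Inl ` A' \<union> Inr ` B' in S \<noteq> {} \<and> (\<forall>u\<in>S. \<forall>v\<in>S. dist_le_in F S k u v))"

end

theory Submission
  imports Defs "HOL-Library.FuncSet"
begin

text \<open>Let the neighbourhoods of the vertices of \<open>A\<close> be \<open>d\<close>-subsets of \<open>B\<close>, \<open>d = \<lfloor>\<alpha>n\<rfloor>\<close>,
  chosen so that for every admissible \<open>\<delta>\<close> no set \<open>U \<subseteq> B\<close> of at most \<open>\<delta>n/16\<close> vertices meets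
  \<open>\<alpha>\<delta>a/2\<close> or more of them in \<open>\<alpha>\<delta>n/4\<close> or more points.  Such a choice exists by counting:
  the proportion of \<open>d\<close>-sets meeting a fixed \<open>U\<close> in at least \<open>k\<close> points is at most
  \<open>(|U|d/n)^k/k! \<le> (3/4)^k\<close>, and \<open>\<delta> \<ge> 10 a powr (-1/3) / \<alpha>\<close> makes the total exponent of
  \<open>3/4\<close> at least \<open>8n\<close>, enough for a union bound over all \<open>U\<close>, all sets of rows and the at most
  \<open>n + 1\<close> essentially different values of \<open>\<delta>\<close>.

  Given a subgraph \<open>H\<close> with at least \<open>\<alpha>\<delta>an\<close> edges, double counting yields a vertex \<open>y \<in> B\<close>
  with at least \<open>\<alpha>\<delta>a/2\<close> \<open>H\<close>-neighbours of \<open>H\<close>-degree at least \<open>\<alpha>\<delta>n/2\<close>.  Greedily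
  picking such neighbours, each new one adds at least \<open>\<alpha>\<delta>n/4\<close> vertices to the union \<open>U\<close> of
  their neighbourhoods as long as \<open>|U| < \<delta>n/16\<close>, so \<open>\<lfloor>1/\<alpha>\<rfloor>\<close> of them suffice; every vertex
  of the chosen set and of \<open>U \<union> {y}\<close> is within distance 2 of \<open>y\<close>.\<close>

section \<open>Binomial estimates\<close>

lemma power_le_exp_times_fact:
  fixes x :: real
  assumes "0 \<le> x"
  shows "x ^ k \<le> exp x * fact k"
proof -
  have "(\<Sum>i\<in>{k}. x ^ i /\<^sub>R fact i) \<le> (\<Sum>i. x ^ i /\<^sub>R fact i)"
    using assms by (intro sum_le_suminf summable_exp_generic) auto
  then have "x ^ k / fact k \<le> exp x"
    by (simp add: exp_def divide_inverse_commute)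
  then show ?thesis by (simp add: divide_le_eq)
qed

lemma binomial_diff_step:
  assumes "k < d" "d \<le> n"
  shows "real ((n - Suc k) choose (d - Suc k)) * real n \<le> real ((n - k) choose (d - k)) * real d"
proof -
  let ?C = "real ((n - k) choose (d - k))" and ?C' = "real ((n - Suc k) choose (d - Suc k))"
  have "(d - k) * ((n - k) choose (d - k)) = (n - k) * ((n - k - 1) choose (d - k - 1))"
    using assms by (intro times_binomial_minus1_eq) simp
  then have rec: "real (d - k) * ?C = real (n - k) * ?C'"
    by (simp flip: of_nat_mult)
  have "k * d \<le> k * n" using assms by simp
  then have "real (d - k) * real n \<le> real d * real (n - k)"
    using assms by (simp add: of_nat_diff algebra_simps flip: of_nat_mult)
  then have "(real (d - k) * real n) * ?C \<le> (real d * real (n - k)) * ?C"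
    by (rule mult_right_mono) simp
  then have "(real (d - k) * ?C) * real n \<le> real (n - k) * (?C * real d)"
    by (simp only: ac_simps)
  then have "real (n - k) * (?C' * real n) \<le> real (n - k) * (?C * real d)"
    by (simp add: rec algebra_simps)
  then show ?thesis using assms by simp
qed

lemma binomial_diff_times_power_le:
  assumes "k \<le> d" "d \<le> n"
  shows "real ((n - k) choose (d - k)) * real n ^ k \<le> real d ^ k * real (n choose d)"
  using assms
proof (induction k)
  case (Suc k)
  have "real ((n - Suc k) choose (d - Suc k)) * real n ^ Suc k
      = (real ((n - Suc k) choose (d - Suc k)) * real n) * real n ^ k" by simp
  also have "\<dots> \<le> (real ((n - k) choose (d - k)) * real d) * real n ^ k"
    using Suc.prems by (intro mult_right_mono binomial_diff_step) auto
  also have "\<dots> \<le> real d ^ Suc k * real (n choose d)"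
    using Suc by (simp add: mult.commute mult.left_commute mult_left_mono)
  finally show ?case .
qed simp

lemma card_supersets_le:
  assumes "finite N" "K \<subseteq> N"
  shows "card {S. S \<subseteq> N \<and> card S = d \<and> K \<subseteq> S} \<le> (card N - card K) choose (d - card K)"
proof -
  let ?T = "{T. T \<subseteq> N - K \<and> card T = d - card K}"
  have finite_K: "finite K" using assms finite_subset by blast
  have finite_T: "finite ?T" using assms(1) by simp
  have "{S. S \<subseteq> N \<and> card S = d \<and> K \<subseteq> S} \<subseteq> (\<lambda>T. T \<union> K) ` ?T"
  proof
    fix S assume S: "S \<in> {S. S \<subseteq> N \<and> card S = d \<and> K \<subseteq> S}"
    then have "card (S - K) = d - card K"
      using card_Diff_subset[OF finite_K] by simp
    moreover have "S = (S - K) \<union> K" using S by blast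
    ultimately show "S \<in> (\<lambda>T. T \<union> K) ` ?T"
      using S by blast
  qed
  then have "card {S. S \<subseteq> N \<and> card S = d \<and> K \<subseteq> S} \<le> card ((\<lambda>T. T \<union> K) ` ?T)"
    using finite_T by (intro card_mono) auto
  also have "\<dots> \<le> card ?T" by (rule card_image_le[OF finite_T])
  also have "\<dots> = (card N - card K) choose (d - card K)"
    using assms finite_K by (simp add: n_subsets card_Diff_subset)
  finally show ?thesis .
qed

lemma card_subsets_meeting_le:
  assumes "finite N" "U \<subseteq> N"
  shows "card {S. S \<subseteq> N \<and> card S = d \<and> k \<le> card (S \<inter> U)}
    \<le> (card U choose k) * ((card N - k) choose (d - k))"
proof -
  let ?Ks = "{K. K \<subseteq> U \<and> card K = k}"
  let ?G = "\<lambda>K. {S. S \<subseteq> N \<and> card S = d \<and> K \<subseteq> S}"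
  have finite_U: "finite U" using assms finite_subset by blast
  have "{S. S \<subseteq> N \<and> card S = d \<and> k \<le> card (S \<inter> U)} \<subseteq> (\<Union>K\<in>?Ks. ?G K)"
  proof
    fix S assume S: "S \<in> {S. S \<subseteq> N \<and> card S = d \<and> k \<le> card (S \<inter> U)}"
    then obtain K where "K \<subseteq> S \<inter> U" "card K = k"
      using obtain_subset_with_card_n by (metis mem_Collect_eq)
    with S show "S \<in> (\<Union>K\<in>?Ks. ?G K)" by blast
  qed
  then have "card {S. S \<subseteq> N \<and> card S = d \<and> k \<le> card (S \<inter> U)} \<le> card (\<Union>K\<in>?Ks. ?G K)"
    using assms(1) finite_U by (intro card_mono) auto
  also have "\<dots> \<le> (\<Sum>K\<in>?Ks. card (?G K))"
    using finite_U by (intro card_UN_le) simp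
  also have "\<dots> \<le> (\<Sum>K\<in>?Ks. (card N - k) choose (d - k))"
    using assms card_supersets_le[OF assms(1)] by (intro sum_mono) fastforce
  also have "\<dots> = (card U choose k) * ((card N - k) choose (d - k))"
    using finite_U by (simp add: n_subsets)
  finally show ?thesis .
qed

lemma card_subsets_meeting_le_power:
  assumes "finite N" "U \<subseteq> N" "d \<le> card N"
  shows "real (card {S. S \<subseteq> N \<and> card S = d \<and> k \<le> card (S \<inter> U)})
    \<le> (real (card U) * real d / real (card N)) ^ k / fact k * real (card N choose d)"
proof (cases "k \<le> d")
  case False
  have "\<not> k \<le> card (S \<inter> U)" if "S \<subseteq> N" "card S = d" for S
  proof -
    have "card (S \<inter> U) \<le> card S" using that assms(1) by (meson card_mono finite_subset inf_le1)
    then show ?thesis using False that by linarith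
  qed
  then have empty: "{S. S \<subseteq> N \<and> card S = d \<and> k \<le> card (S \<inter> U)} = {}" by blast
  show ?thesis unfolding empty by simp
next
  case True
  let ?n = "real (card N)"
  have n_pow: "0 < ?n ^ k"
    using True assms(3) by (cases "k = 0") auto
  have "real (card {S. S \<subseteq> N \<and> card S = d \<and> k \<le> card (S \<inter> U)})
      \<le> real (card U choose k) * real ((card N - k) choose (d - k))"
    using of_nat_mono[OF card_subsets_meeting_le[OF assms(1,2), of d k]] by simp
  also have "\<dots> \<le> (real (card U) ^ k / fact k) * (real d ^ k * real (card N choose d) / ?n ^ k)"
  proof (intro mult_mono)
    have "real ((card U choose k) * fact k) \<le> real (card U ^ k)"
      using binomial_fact_pow by (rule of_nat_mono)
    then show "real (card U choose k) \<le> real (card U) ^ k / fact k"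
      by (simp add: pos_le_divide_eq)
    show "real ((card N - k) choose (d - k)) \<le> real d ^ k * real (card N choose d) / ?n ^ k"
      using binomial_diff_times_power_le[OF True assms(3)] n_pow by (simp add: pos_le_divide_eq)
  qed simp_all
  also have "\<dots> = (real (card U) * real d / ?n) ^ k / fact k * real (card N choose d)"
    by (simp add: power_divide power_mult_distrib ac_simps)
  finally show ?thesis .
qed

lemma card_subsets_meeting_le_three_quarters_power:
  assumes "finite N" "U \<subseteq> N" "d \<le> card N" "4 * card U * d \<le> k * card N"
  shows "real (card {S. S \<subseteq> N \<and> card S = d \<and> k \<le> card (S \<inter> U)}) \<le> (3/4) ^ k * real (card N choose d)"
proof -
  have ratio: "real (card U) * real d / real (card N) \<le> real k / 4"
    using assms(4) by (cases "card N = 0") (simp_all add: field_simps flip: of_nat_mult of_nat_le_iff)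
  have "real (card {S. S \<subseteq> N \<and> card S = d \<and> k \<le> card (S \<inter> U)})
      \<le> (real k / 4) ^ k / fact k * real (card N choose d)"
    using card_subsets_meeting_le_power[OF assms(1-3), of k] ratio
    by (elim order_trans) (intro mult_right_mono divide_right_mono power_mono, simp_all)
  also have "(real k / 4) ^ k / fact k \<le> (exp 1 / 4) ^ k"
    using power_le_exp_times_fact[of "real k" k]
    by (simp add: power_divide divide_le_eq field_simps flip: exp_of_nat_mult)
  also have "\<dots> \<le> (3/4) ^ k"
    using exp_le by (intro power_mono) auto
  finally show ?thesis by (simp add: mult_right_mono)
qed

section \<open>Counting families of sets\<close>

lemma card_UN_le_card_times:
  assumes "finite I" "\<And>i. i \<in> I \<Longrightarrow> real (card (B i)) \<le> b"
  shows "real (card (\<Union>i\<in>I. B i)) \<le> real (card I) * b"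
proof -
  have "real (card (\<Union>i\<in>I. B i)) \<le> (\<Sum>i\<in>I. real (card (B i)))"
    using of_nat_mono[OF card_UN_le[OF assms(1), of B]] by simp
  also have "\<dots> \<le> real (card I) * b" using assms(2) sum_bounded_above[of I _ b] by simp
  finally show ?thesis .
qed

lemma card_PiE_many_in_le:
  assumes "finite I" "finite D" "P \<subseteq> D" "0 \<le> r" "real (card P) \<le> r * real (card D)"
  shows "real (card {f \<in> PiE I (\<lambda>_. D). m \<le> card {x\<in>I. f x \<in> P}})
    \<le> 2 ^ card I * r ^ m * real (card D) ^ card I"
proof -
  let ?Ms = "{M. M \<subseteq> I \<and> card M = m}"
  let ?Q = "\<lambda>M. PiE I (\<lambda>x. if x \<in> M then P else D)"
  have "{f \<in> PiE I (\<lambda>_. D). m \<le> card {x\<in>I. f x \<in> P}} \<subseteq> (\<Union>M\<in>?Ms. ?Q M)"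
  proof
    fix f assume f: "f \<in> {f \<in> PiE I (\<lambda>_. D). m \<le> card {x\<in>I. f x \<in> P}}"
    then obtain M where M: "M \<subseteq> {x\<in>I. f x \<in> P}" "card M = m"
      using obtain_subset_with_card_n by (metis (no_types, lifting) mem_Collect_eq)
    then have "f \<in> ?Q M" using f by (auto simp: PiE_iff)
    with M show "f \<in> (\<Union>M\<in>?Ms. ?Q M)" by blast
  qed
  then have "real (card {f \<in> PiE I (\<lambda>_. D). m \<le> card {x\<in>I. f x \<in> P}}) \<le> real (card (\<Union>M\<in>?Ms. ?Q M))"
    using assms(1,2) finite_subset[OF assms(3,2)] by (intro of_nat_mono card_mono finite_UN_I finite_PiE) auto
  also have "\<dots> \<le> real (card ?Ms) * (r ^ m * real (card D) ^ card I)"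
  proof (rule card_UN_le_card_times)
    fix M assume M: "M \<in> ?Ms"
    have "card (?Q M) = (\<Prod>x\<in>I. if x \<in> M then card P else card D)"
      using assms(1) by (simp add: card_PiE if_distrib)
    also have "\<dots> = card P ^ card (I \<inter> M) * card D ^ card (I - M)"
      using assms(1) by (simp add: prod.If_cases Diff_eq)
    also have "\<dots> = card P ^ m * card D ^ (card I - m)"
      using M assms(1) finite_subset[of M I] by (simp add: Int_absorb1 card_Diff_subset)
    finally have "real (card (?Q M)) = real (card P) ^ m * real (card D) ^ (card I - m)"
      by simp
    also have "\<dots> \<le> (r * real (card D)) ^ m * real (card D) ^ (card I - m)"
      using assms(5) by (intro mult_right_mono power_mono) auto
    also have "\<dots> = r ^ m * real (card D) ^ card I"
      using M assms(1) card_mono[of I M]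
      by (simp add: power_mult_distrib mult.assoc flip: power_add)
    finally show "real (card (?Q M)) \<le> r ^ m * real (card D) ^ card I" .
  qed (use assms(1) in simp)
  also have "\<dots> \<le> 2 ^ card I * (r ^ m * real (card D) ^ card I)"
    using of_nat_mono[where 'a = real, OF binomial_le_pow2[of "card I" m]] assms(1,4)
    by (intro mult_right_mono) (simp_all add: n_subsets)
  finally show ?thesis by (simp add: mult.assoc)
qed

lemma card_heavy_families_le:
  fixes N I :: "'a set" and d :: nat
  defines "D \<equiv> {S. S \<subseteq> N \<and> card S = d}"
  assumes "finite N" "finite I" "d \<le> card N" "4 * u * d \<le> k * card N"
  shows "real (card {f \<in> PiE I (\<lambda>_. D). \<exists>U\<subseteq>N. card U \<le> u \<and> m \<le> card {x\<in>I. k \<le> card (f x \<inter> U)}})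
    \<le> 2 ^ card N * 2 ^ card I * (3/4) ^ (k * m) * real (card (PiE I (\<lambda>_. D)))"
proof -
  let ?Us = "{U. U \<subseteq> N \<and> card U \<le> u}"
  let ?P = "\<lambda>U. {S \<in> D. k \<le> card (S \<inter> U)}"
  let ?B = "\<lambda>U. {f \<in> PiE I (\<lambda>_. D). m \<le> card {x\<in>I. f x \<in> ?P U}}"
  have finite_D: "finite D" unfolding D_def using assms(2) by simp
  then have finite_Pi: "finite (PiE I (\<lambda>_. D))" using assms(3) by (simp add: finite_PiE)
  have "{f \<in> PiE I (\<lambda>_. D). \<exists>U\<subseteq>N. card U \<le> u \<and> m \<le> card {x\<in>I. k \<le> card (f x \<inter> U)}}
      \<subseteq> (\<Union>U\<in>?Us. ?B U)"
  proof (safe)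
    fix f U assume f: "f \<in> PiE I (\<lambda>_. D)" and U: "U \<subseteq> N" "card U \<le> u"
      and heavy: "m \<le> card {x\<in>I. k \<le> card (f x \<inter> U)}"
    have "{x\<in>I. k \<le> card (f x \<inter> U)} = {x\<in>I. f x \<in> ?P U}" using f by auto
    then show "f \<in> (\<Union>U\<in>?Us. ?B U)" using f U heavy by auto
  qed
  then have "real (card {f \<in> PiE I (\<lambda>_. D). \<exists>U\<subseteq>N. card U \<le> u \<and> m \<le> card {x\<in>I. k \<le> card (f x \<inter> U)}})
      \<le> real (card (\<Union>U\<in>?Us. ?B U))"
    using assms(2) finite_Pi by (intro of_nat_mono card_mono finite_UN_I) auto
  also have "\<dots> \<le> real (card ?Us) * (2 ^ card I * (3/4) ^ (k * m) * real (card D) ^ card I)"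
  proof (rule card_UN_le_card_times)
    fix U assume U: "U \<in> ?Us"
    have "4 * card U * d \<le> 4 * u * d" using U by simp
    then have "4 * card U * d \<le> k * card N" using assms(5) by (rule le_trans)
    moreover have "?P U = {S. S \<subseteq> N \<and> card S = d \<and> k \<le> card (S \<inter> U)}"
      unfolding D_def by auto
    ultimately have "real (card (?P U)) \<le> (3/4) ^ k * real (card D)"
      using card_subsets_meeting_le_three_quarters_power[OF assms(2) _ assms(4)] U
      by (simp add: D_def n_subsets[OF assms(2)])
    then show "real (card (?B U)) \<le> 2 ^ card I * (3/4) ^ (k * m) * real (card D) ^ card I"
      using card_PiE_many_in_le[OF assms(3) finite_D, of "?P U" "(3/4) ^ k" m]
      by (simp add: power_mult)
  qed (use assms(2) in simp)
  also have "\<dots> = real (card ?Us) * (2 ^ card I * (3/4) ^ (k * m) * real (card (PiE I (\<lambda>_. D))))"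
    using assms(3) by (simp add: card_PiE)
  also have "\<dots> \<le> 2 ^ card N * (2 ^ card I * (3/4) ^ (k * m) * real (card (PiE I (\<lambda>_. D))))"
  proof (intro mult_right_mono)
    have "card ?Us \<le> card (Pow N)" using assms(2) by (intro card_mono) auto
    then show "real (card ?Us) \<le> 2 ^ card N"
      using assms(2) of_nat_mono[where 'a = real] by (fastforce simp: card_Pow)
  qed simp
  finally show ?thesis by (simp add: mult.assoc)
qed

section \<open>Spread families of neighbourhoods\<close>

definition spread :: "nat \<Rightarrow> nat \<Rightarrow> real \<Rightarrow> real \<Rightarrow> (nat \<Rightarrow> nat set) \<Rightarrow> bool" where
  "spread a n \<alpha> \<delta> N \<longleftrightarrow> (\<forall>U\<subseteq>{..<n}. real (card U) \<le> \<delta> * real n / 16 \<longrightarrow>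
     real (card {x\<in>{..<a}. \<alpha> * \<delta> * real n / 4 \<le> real (card (N x \<inter> U))}) < \<alpha> * \<delta> * real a / 2)"

lemma not_spread_iff:
  assumes "0 \<le> \<delta>"
  shows "\<not> spread a n \<alpha> \<delta> N \<longleftrightarrow> (\<exists>U\<subseteq>{..<n}. card U \<le> nat \<lfloor>\<delta> * real n / 16\<rfloor> \<and>
    nat \<lceil>\<alpha> * \<delta> * real a / 2\<rceil> \<le> card {x\<in>{..<a}. nat \<lceil>\<alpha> * \<delta> * real n / 4\<rceil> \<le> card (N x \<inter> U)})"
  using assms by (simp add: spread_def nat_ceiling_le_eq le_nat_iff le_floor_iff not_less)

lemma spread_of_smaller_delta:
  assumes "spread a n \<alpha> \<delta>' N" "0 \<le> \<alpha>" "\<delta>' \<le> \<delta>"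
    and "\<And>c::nat. real c \<le> \<delta> * real n / 16 \<Longrightarrow> real c \<le> \<delta>' * real n / 16"
  shows "spread a n \<alpha> \<delta> N"
  unfolding spread_def
proof (intro allI impI)
  fix U assume U: "U \<subseteq> {..<n}" "real (card U) \<le> \<delta> * real n / 16"
  have "\<alpha> * \<delta>' * real n / 4 \<le> \<alpha> * \<delta> * real n / 4"
    using assms(2,3) by (simp add: mult_left_mono mult_right_mono divide_right_mono)
  then have "real (card {x\<in>{..<a}. \<alpha> * \<delta> * real n / 4 \<le> real (card (N x \<inter> U))})
      \<le> real (card {x\<in>{..<a}. \<alpha> * \<delta>' * real n / 4 \<le> real (card (N x \<inter> U))})"
    by (intro of_nat_mono card_mono) auto
  also have "\<dots> < \<alpha> * \<delta>' * real a / 2"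
    using assms(1,4) U unfolding spread_def by blast
  also have "\<dots> \<le> \<alpha> * \<delta> * real a / 2"
    using assms(2,3) by (simp add: mult_left_mono mult_right_mono divide_right_mono)
  finally show "real (card {x\<in>{..<a}. \<alpha> * \<delta> * real n / 4 \<le> real (card (N x \<inter> U))}) < \<alpha> * \<delta> * real a / 2" .
qed

lemma spread_subset:
  assumes "spread a n \<alpha> \<delta> N" "\<And>x. x < a \<Longrightarrow> N' x \<subseteq> N x"
  shows "spread a n \<alpha> \<delta> N'"
  unfolding spread_def
proof (intro allI impI)
  fix U assume U: "U \<subseteq> {..<n}" "real (card U) \<le> \<delta> * real n / 16"
  have "card (N' x \<inter> U) \<le> card (N x \<inter> U)" if "x < a" for x
    using U(1) assms(2)[OF that] by (intro card_mono) (auto intro: finite_subset)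
  then have "real (card {x\<in>{..<a}. \<alpha> * \<delta> * real n / 4 \<le> real (card (N' x \<inter> U))})
      \<le> real (card {x\<in>{..<a}. \<alpha> * \<delta> * real n / 4 \<le> real (card (N x \<inter> U))})"
    by (intro of_nat_mono card_mono) (auto intro: order_trans)
  also have "\<dots> < \<alpha> * \<delta> * real a / 2"
    using assms(1) U unfolding spread_def by blast
  finally show "real (card {x\<in>{..<a}. \<alpha> * \<delta> * real n / 4 \<le> real (card (N' x \<inter> U))}) < \<alpha> * \<delta> * real a / 2" .
qed

lemma ceiling_thresholds_product_ge:
  fixes \<alpha> \<delta> :: real and a n :: nat
  assumes "0 < \<alpha>" "0 < \<delta>" "0 < a" "10 * real a powr (-1/3) / \<alpha> \<le> \<delta>"
  shows "8 * n \<le> nat \<lceil>\<alpha> * \<delta> * real n / 4\<rceil> * nat \<lceil>\<alpha> * \<delta> * real a / 2\<rceil>"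
proof -
  have "0 \<le> \<alpha> * \<delta>" using assms by simp
  have "10 * real a powr (-1/3) \<le> \<alpha> * \<delta>" using assms by (simp add: field_simps)
  then have "(10 * real a powr (-1/3)) ^ 2 * real a \<le> (\<alpha> * \<delta>) ^ 2 * real a"
    by (intro mult_right_mono power_mono) auto
  moreover have "(10 * real a powr (-1/3)) ^ 2 * real a = 100 * real a powr (1/3)"
  proof -
    have "real a powr (-1/3 + -1/3 + 1) = real a powr (-1/3) * real a powr (-1/3) * real a powr 1"
      by (simp only: powr_add)
    then show ?thesis by (simp add: power2_eq_square)
  qed
  moreover have "1 \<le> real a powr (1/3)" using assms(3) by (simp add: ge_one_powr_ge_zero)
  ultimately have "100 \<le> (\<alpha> * \<delta>) ^ 2 * real a" by linarith
  then have "8 * real n \<le> (\<alpha> * \<delta> * real n / 4) * (\<alpha> * \<delta> * real a / 2)"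
    using mult_right_mono[of 100 "(\<alpha> * \<delta>) ^ 2 * real a" "real n"]
    by (simp add: power2_eq_square field_simps)
  also have "\<dots> \<le> real (nat \<lceil>\<alpha> * \<delta> * real n / 4\<rceil>) * real (nat \<lceil>\<alpha> * \<delta> * real a / 2\<rceil>)"
    using mult_nonneg_nonneg[OF \<open>0 \<le> \<alpha> * \<delta>\<close> of_nat_0_le_iff[of n]]
      mult_nonneg_nonneg[OF \<open>0 \<le> \<alpha> * \<delta>\<close> of_nat_0_le_iff[of a]]
    by (intro mult_mono real_nat_ceiling_ge) simp_all
  finally show ?thesis by (simp flip: of_nat_mult)
qed

lemma card_not_spread_le:
  fixes \<alpha> \<delta> :: real and a n :: nat
  defines "\<Omega> \<equiv> PiE {..<a} (\<lambda>_. {S. S \<subseteq> {..<n} \<and> card S = nat \<lfloor>\<alpha> * real n\<rfloor>})"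
  assumes "0 < \<alpha>" "\<alpha> \<le> 1" "0 < a" "10 * real a powr (-1/3) / \<alpha> \<le> \<delta>"
  shows "real (card {N \<in> \<Omega>. \<not> spread a n \<alpha> \<delta> N}) \<le> 2 ^ n * 2 ^ a * (3/4) ^ (8 * n) * real (card \<Omega>)"
proof -
  define d where "d = nat \<lfloor>\<alpha> * real n\<rfloor>"
  define u where "u = nat \<lfloor>\<delta> * real n / 16\<rfloor>"
  define k where "k = nat \<lceil>\<alpha> * \<delta> * real n / 4\<rceil>"
  define m where "m = nat \<lceil>\<alpha> * \<delta> * real a / 2\<rceil>"
  have "0 < 10 * real a powr (-1/3) / \<alpha>" using assms(2,4) by simp
  with assms(5) have "0 < \<delta>" by linarith
  have d: "real d \<le> \<alpha> * real n" unfolding d_def using assms(2) by simp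
  then have "d \<le> n" using assms(3) mult_right_mono[of \<alpha> 1 "real n"] by simp
  have "real u \<le> \<delta> * real n / 16" unfolding u_def using \<open>0 < \<delta>\<close> by (intro of_nat_floor) simp
  then have "real u * real d \<le> (\<delta> * real n / 16) * (\<alpha> * real n)"
    using d \<open>0 < \<delta>\<close> by (intro mult_mono) simp_all
  then have "real (4 * u * d) \<le> (\<alpha> * \<delta> * real n / 4) * real n"
    by (simp add: field_simps)
  also have "\<dots> \<le> real k * real n"
    unfolding k_def by (intro mult_right_mono real_nat_ceiling_ge) simp
  finally have "4 * u * d \<le> k * n" by (simp only: of_nat_mult[symmetric] of_nat_le_iff)
  have "{N \<in> \<Omega>. \<not> spread a n \<alpha> \<delta> N}
      = {N \<in> \<Omega>. \<exists>U\<subseteq>{..<n}. card U \<le> u \<and> m \<le> card {x\<in>{..<a}. k \<le> card (N x \<inter> U)}}"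
    unfolding u_def k_def m_def using not_spread_iff[OF less_imp_le[OF \<open>0 < \<delta>\<close>]] by simp
  also have "real (card \<dots>) \<le> 2 ^ n * 2 ^ a * (3/4) ^ (k * m) * real (card \<Omega>)"
    unfolding \<Omega>_def d_def
    using card_heavy_families_le[of "{..<n}" "{..<a}" d u k m] \<open>d \<le> n\<close> \<open>4 * u * d \<le> k * n\<close>
    by (simp add: d_def)
  also have "\<dots> \<le> 2 ^ n * 2 ^ a * (3/4) ^ (8 * n) * real (card \<Omega>)"
    using ceiling_thresholds_product_ge[OF assms(2) \<open>0 < \<delta>\<close> assms(4,5), of n]
    unfolding k_def m_def by (intro mult_right_mono power_decreasing) simp_all
  finally show ?thesis .
qed

lemma exists_outside_union:
  assumes "finite \<Omega>" "finite I" "\<And>i. i \<in> I \<Longrightarrow> B i \<subseteq> \<Omega>" "\<And>i. i \<in> I \<Longrightarrow> real (card (B i)) \<le> b"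
    and "real (card I) * b < real (card \<Omega>)"
  shows "\<exists>\<omega>\<in>\<Omega>. \<forall>i\<in>I. \<omega> \<notin> B i"
proof (rule ccontr)
  assume "\<not> ?thesis"
  then have "\<Omega> = (\<Union>i\<in>I. B i)" using assms(3) by blast
  then show False using card_UN_le_card_times[of I B b, OF assms(2,4)] assms(5) by simp
qed

lemma union_bound_arithmetic:
  assumes "0 < n" "a \<le> n"
  shows "real (n + 1) * (2 ^ n * 2 ^ a * (3/4) ^ (8 * n)) < 1"
proof -
  have "real (n + 1) \<le> 2 ^ n"
    using of_nat_mono[where 'a = real, OF Suc_leI[OF less_exp[of n]]] by simp
  moreover have "(2::real) ^ a \<le> 2 ^ n" using assms(2) by (rule power_increasing) simp
  ultimately have "real (n + 1) * (2 ^ n * 2 ^ a * (3/4) ^ (8 * n)) \<le> 2 ^ n * (2 ^ n * 2 ^ n * ((3/4) ^ 8) ^ n)"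
    by (intro mult_mono) (simp_all add: power_mult)
  also have "\<dots> = (2 * (2 * (2 * (3/4) ^ 8))) ^ n" by (simp only: power_mult_distrib mult.assoc)
  also have "\<dots> < 1" using assms(1) by (intro power_less_one_iff[THEN iffD2]) (simp_all add: power_divide)
  finally show ?thesis .
qed

text \<open>Being spread for some \<open>\<delta>' \<le> \<delta>\<close> with \<open>\<lfloor>\<delta>n/16\<rfloor> \<le> \<delta>'n/16\<close> implies being spread for
  \<open>\<delta>\<close>, so it suffices to check the following \<open>n + 1\<close> values.\<close>

definition delta_grid :: "nat \<Rightarrow> real \<Rightarrow> real set" where
  "delta_grid n \<delta>\<^sub>0 = {\<delta> \<in> (\<lambda>u. max (16 * real u / real n) \<delta>\<^sub>0) ` {..n}. \<delta> \<le> 1}"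

lemma card_delta_grid_le: "card (delta_grid n \<delta>\<^sub>0) \<le> n + 1"
proof -
  have "card (delta_grid n \<delta>\<^sub>0) \<le> card ((\<lambda>u. max (16 * real u / real n) \<delta>\<^sub>0) ` {..n})"
    unfolding delta_grid_def by (intro card_mono) auto
  also have "\<dots> \<le> n + 1" using card_image_le[of "{..n}"] by fastforce
  finally show ?thesis .
qed

lemma spread_if_spread_on_delta_grid:
  assumes "0 < n" "0 \<le> \<alpha>" "0 < \<delta>\<^sub>0" "\<delta>\<^sub>0 \<le> \<delta>" "\<delta> \<le> 1"
    and grid: "\<And>\<delta>'. \<delta>' \<in> delta_grid n \<delta>\<^sub>0 \<Longrightarrow> spread a n \<alpha> \<delta>' N"
  shows "spread a n \<alpha> \<delta> N"
proof -
  define u where "u = nat \<lfloor>\<delta> * real n / 16\<rfloor>"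
  define \<delta>' where "\<delta>' = max (16 * real u / real n) \<delta>\<^sub>0"
  have u: "real u \<le> \<delta> * real n / 16" unfolding u_def using assms(3,4) by (intro of_nat_floor) simp
  then have "16 * real u / real n \<le> \<delta>" using assms(1) by (simp add: divide_le_eq)
  then have "\<delta>' \<le> \<delta>" unfolding \<delta>'_def using assms(4) by simp
  moreover have "u \<le> n" using u assms(5) mult_right_mono[of \<delta> 1 "real n"] by linarith
  ultimately have "\<delta>' \<in> delta_grid n \<delta>\<^sub>0" unfolding delta_grid_def \<delta>'_def using assms(5) by auto
  show ?thesis
  proof (rule spread_of_smaller_delta[OF grid[OF \<open>\<delta>' \<in> delta_grid n \<delta>\<^sub>0\<close>] assms(2) \<open>\<delta>' \<le> \<delta>\<close>])
    fix c :: nat assume "real c \<le> \<delta> * real n / 16"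
    then have "c \<le> u" unfolding u_def using assms(3,4) by (simp add: le_nat_iff le_floor_iff)
    also have "real u = (16 * real u / real n) * real n / 16" using assms(1) by simp
    also have "\<dots> \<le> \<delta>' * real n / 16" unfolding \<delta>'_def by (intro divide_right_mono mult_right_mono) simp_all
    finally show "real c \<le> \<delta>' * real n / 16" by simp
  qed
qed

lemma exists_spread_family:
  fixes \<alpha> :: real and a n :: nat
  assumes "0 < \<alpha>" "\<alpha> \<le> 1" "0 < a" "a \<le> n"
  shows "\<exists>N\<in>PiE {..<a} (\<lambda>_. {S. S \<subseteq> {..<n} \<and> card S = nat \<lfloor>\<alpha> * real n\<rfloor>}).
    \<forall>\<delta>. 10 * real a powr (-1/3) / \<alpha> \<le> \<delta> \<and> \<delta> \<le> 1 \<longrightarrow> spread a n \<alpha> \<delta> N"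
proof -
  define \<Omega> where "\<Omega> = PiE {..<a} (\<lambda>_. {S. S \<subseteq> {..<n} \<and> card S = nat \<lfloor>\<alpha> * real n\<rfloor>})"
  define \<delta>\<^sub>0 where "\<delta>\<^sub>0 = 10 * real a powr (-1/3) / \<alpha>"
  define b where "b = 2 ^ n * 2 ^ a * (3/4) ^ (8 * n) * real (card \<Omega>)"
  have "0 < n" "0 < \<delta>\<^sub>0" using assms unfolding \<delta>\<^sub>0_def by simp_all
  have "nat \<lfloor>\<alpha> * real n\<rfloor> \<le> n"
    using assms(2) mult_right_mono[of \<alpha> 1 "real n"] by linarith
  then obtain S where "S \<subseteq> {..<n}" "card S = nat \<lfloor>\<alpha> * real n\<rfloor>"
    using obtain_subset_with_card_n[of "nat \<lfloor>\<alpha> * real n\<rfloor>" "{..<n}"] by auto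
  then have "\<Omega> \<noteq> {}" unfolding \<Omega>_def PiE_eq_empty_iff by blast
  moreover have "finite \<Omega>" unfolding \<Omega>_def by (simp add: finite_PiE)
  ultimately have "0 < real (card \<Omega>)" by (simp add: card_gt_0_iff)
  have "real (card (delta_grid n \<delta>\<^sub>0)) * b \<le> real (n + 1) * (2 ^ n * 2 ^ a * (3/4) ^ (8 * n)) * real (card \<Omega>)"
    using card_delta_grid_le[of n \<delta>\<^sub>0] unfolding b_def by (simp add: mult_right_mono mult.assoc)
  also have "\<dots> < real (card \<Omega>)"
    using union_bound_arithmetic[OF \<open>0 < n\<close> assms(4)] \<open>0 < real (card \<Omega>)\<close> by simp
  finally have "real (card (delta_grid n \<delta>\<^sub>0)) * b < real (card \<Omega>)" .
  then have "\<exists>N\<in>\<Omega>. \<forall>\<delta>\<in>delta_grid n \<delta>\<^sub>0. N \<notin> {N \<in> \<Omega>. \<not> spread a n \<alpha> \<delta> N}"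
  proof (intro exists_outside_union[OF \<open>finite \<Omega>\<close>])
    fix \<delta> assume "\<delta> \<in> delta_grid n \<delta>\<^sub>0"
    then have "\<delta>\<^sub>0 \<le> \<delta>" unfolding delta_grid_def by auto
    then show "real (card {N \<in> \<Omega>. \<not> spread a n \<alpha> \<delta> N}) \<le> b"
      unfolding b_def \<Omega>_def \<delta>\<^sub>0_def by (rule card_not_spread_le[OF assms(1-3)])
  qed (auto simp: delta_grid_def)
  then obtain N where "N \<in> \<Omega>" and "\<forall>\<delta>\<in>delta_grid n \<delta>\<^sub>0. spread a n \<alpha> \<delta> N" by blast
  then have "spread a n \<alpha> \<delta> N" if "\<delta>\<^sub>0 \<le> \<delta>" "\<delta> \<le> 1" for \<delta>
    using spread_if_spread_on_delta_grid[OF \<open>0 < n\<close> _ \<open>0 < \<delta>\<^sub>0\<close> that] assms(1) by auto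
  then show ?thesis using \<open>N \<in> \<Omega>\<close> unfolding \<Omega>_def \<delta>\<^sub>0_def by blast
qed

section \<open>Walks in induced subgraphs\<close>

lemma badj_commute: "badj F u v \<longleftrightarrow> badj F v u"
  unfolding badj_def by blast

lemma dist_le_in_iff_successively:
  "dist_le_in F S k u v \<longleftrightarrow> (\<exists>p. p \<noteq> [] \<and> length p \<le> k + 1 \<and> hd p = u \<and> last p = v \<and>
      set p \<subseteq> S \<and> successively (badj F) p)"
  unfolding dist_le_in_def successively_conv_nth by simp

lemma dist_le_in_refl: "u \<in> S \<Longrightarrow> dist_le_in F S k u u"
  unfolding dist_le_in_iff_successively by (intro exI[of _ "[u]"]) simp

lemma dist_le_in_edge: "u \<in> S \<Longrightarrow> v \<in> S \<Longrightarrow> badj F u v \<Longrightarrow> dist_le_in F S 1 u v"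
  unfolding dist_le_in_iff_successively by (intro exI[of _ "[u, v]"]) simp

lemma dist_le_in_mono: "dist_le_in F S k u v \<Longrightarrow> k \<le> l \<Longrightarrow> dist_le_in F S l u v"
  unfolding dist_le_in_iff_successively by (elim exE, rule_tac x = p in exI) auto

lemma dist_le_in_sym: "dist_le_in F S k u v \<Longrightarrow> dist_le_in F S k v u"
  unfolding dist_le_in_iff_successively
  by (elim exE, rule_tac x = "rev p" in exI) (simp add: hd_rev last_rev badj_commute)

lemma dist_le_in_trans:
  assumes "dist_le_in F S k u v" "dist_le_in F S l v w"
  shows "dist_le_in F S (k + l) u w"
proof -
  obtain p q where p: "p \<noteq> []" "length p \<le> k + 1" "hd p = u" "last p = v" "set p \<subseteq> S"
      "successively (badj F) p"
    and q: "q \<noteq> []" "length q \<le> l + 1" "hd q = v" "last q = w" "set q \<subseteq> S"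
      "successively (badj F) q"
    using assms unfolding dist_le_in_iff_successively by blast
  then obtain q' where q': "q = v # q'" by (cases q) auto
  have "successively (badj F) (p @ q')"
    using p q q' by (auto simp: successively_append_iff successively_Cons)
  moreover have "last (p @ q') = w" using p q q' by (cases "q' = []") auto
  ultimately show ?thesis
    unfolding dist_le_in_iff_successively using p q q' by (intro exI[of _ "p @ q'"]) auto
qed

lemma induced_diam_le_mono: "induced_diam_le F A B k \<Longrightarrow> k \<le> l \<Longrightarrow> induced_diam_le F A B l"
  unfolding induced_diam_le_def Let_def by (meson dist_le_in_mono)

lemma induced_diam_le_4_if_hub:
  assumes "y \<in> B" "\<And>x. x \<in> A \<Longrightarrow> (x, y) \<in> F" "\<And>b. b \<in> B \<Longrightarrow> b = y \<or> (\<exists>x\<in>A. (x, b) \<in> F)"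
  shows "induced_diam_le F A B 4"
proof -
  define S where "S = Inl ` A \<union> Inr ` B"
  have y: "Inr y \<in> S" unfolding S_def using assms(1) by simp
  have to_hub: "dist_le_in F S 2 s (Inr y)" if "s \<in> S" for s
  proof -
    have edge: "dist_le_in F S 1 (Inl x) (Inr y)" if "x \<in> A" for x
      using that assms(2) y unfolding S_def by (intro dist_le_in_edge) (auto simp: badj_def)
    from \<open>s \<in> S\<close> consider x where "x \<in> A" "s = Inl x" | b where "b \<in> B" "s = Inr b"
      unfolding S_def by blast
    then show ?thesis
    proof cases
      case 1
      then show ?thesis using edge dist_le_in_mono by fastforce
    next
      case 2
      with assms(3) consider "b = y" | x where "x \<in> A" "(x, b) \<in> F" by blast
      then show ?thesis
      proof cases
        case 1
        then show ?thesis using \<open>s = Inr b\<close> y by (simp add: dist_le_in_refl)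
      next
        case 2
        then have "dist_le_in F S 1 s (Inl x)"
          using \<open>s \<in> S\<close> \<open>s = Inr b\<close> unfolding S_def by (intro dist_le_in_edge) (auto simp: badj_def)
        from dist_le_in_trans[OF this edge[OF \<open>x \<in> A\<close>]] show ?thesis by (simp add: numeral_2_eq_2)
      qed
    qed
  qed
  show ?thesis
    unfolding induced_diam_le_def Let_def S_def[symmetric]
    using y dist_le_in_trans[OF to_hub dist_le_in_sym[OF to_hub]] by fastforce
qed

section \<open>Finding a part of small diameter\<close>

lemma card_eq_sum_card_Image:
  assumes "finite A" "finite B" "F \<subseteq> A \<times> B"
  shows "card F = (\<Sum>x\<in>A. card (F `` {x}))"
proof -
  have "finite (F `` {x})" for x
    using finite_subset[OF Image_subset[OF assms(3)] assms(2)] .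
  then have "card (Sigma A (\<lambda>x. F `` {x})) = (\<Sum>x\<in>A. card (F `` {x}))"
    using assms(1) by simp
  moreover have "Sigma A (\<lambda>x. F `` {x}) = F" using assms(3) by auto
  ultimately show ?thesis by simp
qed

lemma sum_card_Image_eq_sum_card_converse:
  assumes "finite X" "finite B" "F \<subseteq> A \<times> B"
  shows "(\<Sum>x\<in>X. card (F `` {x})) = (\<Sum>y\<in>B. card {x\<in>X. (x, y) \<in> F})"
proof -
  let ?F = "F \<inter> X \<times> B"
  have "(\<Sum>x\<in>X. card (F `` {x})) = (\<Sum>x\<in>X. card (?F `` {x}))"
    using assms(3) by (intro sum.cong arg_cong[where f = card]) auto
  also have "\<dots> = card ?F" using assms(1,2) by (simp add: card_eq_sum_card_Image)
  also have "\<dots> = card (converse ?F)" by simp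
  also have "\<dots> = (\<Sum>y\<in>B. card (converse ?F `` {y}))" using assms(1,2) by (intro card_eq_sum_card_Image) auto
  also have "\<dots> = (\<Sum>y\<in>B. card {x\<in>X. (x, y) \<in> F})"
    by (intro sum.cong arg_cong[where f = card]) auto
  finally show ?thesis .
qed

lemma card_le_sum_high_degree:
  assumes "finite A" "finite B" "F \<subseteq> A \<times> B" "0 \<le> t"
  shows "real (card F) \<le> (\<Sum>x\<in>{x\<in>A. t \<le> real (card (F `` {x}))}. real (card (F `` {x}))) + t * real (card A)"
proof -
  let ?H = "{x\<in>A. t \<le> real (card (F `` {x}))}"
  have "real (card F) = (\<Sum>x\<in>A. real (card (F `` {x})))"
    using card_eq_sum_card_Image[OF assms(1-3)] by simp
  also have "\<dots> = (\<Sum>x\<in>?H. real (card (F `` {x}))) + (\<Sum>x\<in>A - ?H. real (card (F `` {x})))"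
    using sum.subset_diff[of ?H A "\<lambda>x. real (card (F `` {x}))"] assms(1) by (simp add: add.commute)
  also have "(\<Sum>x\<in>A - ?H. real (card (F `` {x}))) \<le> (\<Sum>x\<in>A - ?H. t)"
    by (intro sum_mono) auto
  also have "\<dots> \<le> t * real (card A)"
    using assms(1,4) card_mono[of A "A - ?H"] by (simp add: mult_left_mono mult.commute)
  finally show ?thesis by simp
qed

lemma exists_ge_of_sum_ge:
  fixes f :: "'a \<Rightarrow> real"
  assumes "finite B" "B \<noteq> {}" "c * real (card B) \<le> (\<Sum>y\<in>B. f y)"
  shows "\<exists>y\<in>B. c \<le> f y"
proof (rule ccontr)
  assume "\<not> ?thesis"
  then have "(\<Sum>y\<in>B. f y) < (\<Sum>y\<in>B. c)"
    using assms(1,2) by (intro sum_strict_mono) auto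
  then show False using assms(3) by (simp add: mult.commute)
qed

lemma exists_vertex_with_many_high_degree_neighbours:
  assumes "F \<subseteq> {..<a} \<times> {..<n}" "0 < n" "0 \<le> t" "t * real a + s * real n \<le> real (card F)"
  shows "\<exists>y<n. s \<le> real (card {x\<in>{..<a}. t \<le> real (card (F `` {x})) \<and> (x, y) \<in> F})"
proof -
  let ?H = "{x\<in>{..<a}. t \<le> real (card (F `` {x}))}"
  have "s * real n \<le> (\<Sum>x\<in>?H. real (card (F `` {x})))"
    using card_le_sum_high_degree[OF _ _ assms(1,3)] assms(4) by simp
  also have "\<dots> = (\<Sum>y<n. real (card {x\<in>?H. (x, y) \<in> F}))"
    using sum_card_Image_eq_sum_card_converse[of ?H "{..<n}" F] assms(1)
    by (simp flip: of_nat_sum)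
  finally obtain y where "y < n" "s \<le> real (card {x\<in>?H. (x, y) \<in> F})"
    using exists_ge_of_sum_ge[of "{..<n}"] assms(2) by fastforce
  then show ?thesis by (auto simp: conj_assoc)
qed

lemma greedy_large_neighbourhood:
  assumes F: "F \<subseteq> {..<a} \<times> {..<n}" and spread: "spread a n \<alpha> \<delta> (\<lambda>x. F `` {x})"
    and X: "X \<subseteq> {..<a}" "\<alpha> * \<delta> * real a / 2 \<le> real (card X)"
    and degree: "\<And>x. x \<in> X \<Longrightarrow> \<alpha> * \<delta> * real n / 2 \<le> real (card (F `` {x}))"
  shows "\<exists>A'\<subseteq>X. card A' \<le> j \<and>
    (\<delta> * real n / 16 \<le> real (card (F `` A')) \<or> real j * (\<alpha> * \<delta> * real n / 4) \<le> real (card (F `` A')))"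
proof (induction j)
  case 0
  show ?case by (intro exI[of _ "{}"]) simp
next
  case (Suc j)
  then obtain A' where A': "A' \<subseteq> X" "card A' \<le> j" and
    large: "\<delta> * real n / 16 \<le> real (card (F `` A')) \<or> real j * (\<alpha> * \<delta> * real n / 4) \<le> real (card (F `` A'))"
    by blast
  define U where "U = F `` A'"
  have finite_row: "finite (F `` {x})" for x
    using finite_subset[OF Image_subset[OF F]] by simp
  have "U \<subseteq> {..<n}" unfolding U_def using F by blast
  then have "finite U" using finite_subset by blast
  show ?case
  proof (cases "\<delta> * real n / 16 \<le> real (card U)")
    case True
    then show ?thesis using A' unfolding U_def by (intro exI[of _ A']) auto
  next
    case False
    with large have U_grows: "real j * (\<alpha> * \<delta> * real n / 4) \<le> real (card U)" unfolding U_def by simp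
    let ?heavy = "{x\<in>{..<a}. \<alpha> * \<delta> * real n / 4 \<le> real (card (F `` {x} \<inter> U))}"
    have "real (card ?heavy) < \<alpha> * \<delta> * real a / 2"
      using spread[unfolded spread_def, rule_format, OF \<open>U \<subseteq> {..<n}\<close>] False by simp
    then have "\<not> X \<subseteq> ?heavy" using X(2) card_mono[of ?heavy X] by fastforce
    then obtain x where "x \<in> X" "x \<notin> ?heavy" by blast
    then have x: "x \<in> X" "real (card (F `` {x} \<inter> U)) < \<alpha> * \<delta> * real n / 4"
      using X(1) by auto
    have "card (F `` {x} - U) = card (F `` {x}) - card (F `` {x} \<inter> U)"
      using finite_row by (intro card_Diff_subset_Int) simp
    moreover have "card (F `` {x} \<inter> U) \<le> card (F `` {x})"
      using finite_row by (intro card_mono) auto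
    ultimately have new: "\<alpha> * \<delta> * real n / 4 \<le> real (card (F `` {x} - U))"
      using degree[OF x(1)] x(2) by (simp add: of_nat_diff)
    have "card (U \<union> (F `` {x} - U)) = card U + card (F `` {x} - U)"
      using \<open>finite U\<close> finite_row by (intro card_Un_disjoint) auto
    moreover have "F `` insert x A' = U \<union> (F `` {x} - U)" unfolding U_def by auto
    ultimately have "card (F `` insert x A') = card U + card (F `` {x} - U)" by simp
    then have "real (Suc j) * (\<alpha> * \<delta> * real n / 4) \<le> real (card (F `` insert x A'))"
      using U_grows new by (simp add: algebra_simps)
    moreover have "card (insert x A') \<le> Suc j"
      using A' finite_subset[OF _ finite_lessThan[of a]] X(1) by (simp add: card_insert_if)
    ultimately show ?thesis using x(1) A'(1) by (intro exI[of _ "insert x A'"]) auto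
  qed
qed

lemma exists_small_part_of_small_diameter:
  assumes "0 < \<alpha>" "\<alpha> \<le> 1/2" "0 < \<delta>" "0 < n" and F: "F \<subseteq> {..<a} \<times> {..<n}"
    and spread: "spread a n \<alpha> \<delta> (\<lambda>x. F `` {x})" and many_edges: "\<alpha> * \<delta> * real a * real n \<le> real (card F)"
  shows "\<exists>A' B'. A' \<subseteq> {..<a} \<and> B' \<subseteq> {..<n} \<and> real (card A') \<le> 1 / \<alpha> \<and>
    \<delta> * real n / 16 \<le> real (card B') \<and> induced_diam_le F A' B' 6"
proof -
  obtain y where "y < n" and
    X: "\<alpha> * \<delta> * real a / 2 \<le> real (card {x\<in>{..<a}. \<alpha> * \<delta> * real n / 2 \<le> real (card (F `` {x})) \<and> (x, y) \<in> F})"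
    using exists_vertex_with_many_high_degree_neighbours[OF F \<open>0 < n\<close>, of "\<alpha> * \<delta> * real n / 2" "\<alpha> * \<delta> * real a / 2"]
      assms(1,3) many_edges by (auto simp: algebra_simps)
  define K where "K = nat \<lfloor>1 / \<alpha>\<rfloor>"
  obtain A' where A': "A' \<subseteq> {x\<in>{..<a}. \<alpha> * \<delta> * real n / 2 \<le> real (card (F `` {x})) \<and> (x, y) \<in> F}"
    "card A' \<le> K" and
    large: "\<delta> * real n / 16 \<le> real (card (F `` A')) \<or> real K * (\<alpha> * \<delta> * real n / 4) \<le> real (card (F `` A'))"
    using greedy_large_neighbourhood[OF F spread _ X] by blast
  have "real K \<le> 1 / \<alpha>" unfolding K_def using assms(1) by (intro of_nat_floor) simp
  then have small: "real (card A') \<le> 1 / \<alpha>" using of_nat_mono[where 'a = real, OF A'(2)] by linarith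
  have "1 / \<alpha> - 1 \<le> real K" unfolding K_def by linarith
  then have "1 - \<alpha> \<le> real K * \<alpha>" using assms(1) by (simp add: field_simps)
  then have "\<delta> * real n / 16 \<le> real K * (\<alpha> * \<delta> * real n / 4)"
    using assms(2,3) mult_right_mono[of "1/4" "real K * \<alpha>" "\<delta> * real n / 4"] by simp
  with large have "\<delta> * real n / 16 \<le> real (card (F `` A'))" by linarith
  also have "\<dots> \<le> real (card (insert y (F `` A')))"
    using finite_subset[OF Image_subset[OF F]] by (simp add: card_insert_le)
  finally have "\<delta> * real n / 16 \<le> real (card (insert y (F `` A')))" .
  moreover have "induced_diam_le F A' (insert y (F `` A')) 4"
    using A'(1) by (intro induced_diam_le_4_if_hub) auto
  ultimately show ?thesis
    using small A'(1) \<open>y < n\<close> F by (intro exI[of _ A'] exI[of _ "insert y (F `` A')"])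
      (auto intro: induced_diam_le_mono)
qed

theorem lemma4:
  fixes \<alpha> :: real and a n :: nat
  assumes "0 < \<alpha>" "\<alpha> \<le> 1/2" "0 < a" "0 < n"
    and "real n \<ge> 1000 * (ln (real a) + 1) / \<alpha>" "n \<ge> a + 1"
  shows "\<exists>E :: (nat \<times> nat) set. E \<subseteq> {..<a} \<times> {..<n} \<and>
    (\<forall>x<a. card {y. (x, y) \<in> E} = nat \<lfloor>\<alpha> * real n\<rfloor>) \<and>
    (\<forall>\<delta>::real. 0 < \<delta> \<and> \<delta> \<le> 1 \<and> \<delta> \<ge> 10 * real a powr (-1/3) / \<alpha> \<longrightarrow>
      (\<forall>F. F \<subseteq> E \<and> real (card F) \<ge> \<alpha> * \<delta> * real a * real n \<longrightarrow>
        (\<exists>A' B'. A' \<subseteq> {..<a} \<and> B' \<subseteq> {..<n} \<and> real (card A') \<le> 1 / \<alpha> \<and>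
           real (card B') \<ge> \<delta> * real n / 16 \<and> induced_diam_le F A' B' 6)))"
proof -
  obtain N where N: "N \<in> PiE {..<a} (\<lambda>_. {S. S \<subseteq> {..<n} \<and> card S = nat \<lfloor>\<alpha> * real n\<rfloor>})"
    and spread: "\<And>\<delta>. 10 * real a powr (-1/3) / \<alpha> \<le> \<delta> \<Longrightarrow> \<delta> \<le> 1 \<Longrightarrow> spread a n \<alpha> \<delta> N"
    using exists_spread_family[of \<alpha> a n] assms(1-3,6) by auto
  define E where "E = Sigma {..<a} N"
  have row: "E `` {x} = N x" if "x < a" for x using that unfolding E_def by auto
  have E: "E \<subseteq> {..<a} \<times> {..<n}" using N unfolding E_def by (auto simp: PiE_iff)
  show ?thesis
  proof (intro exI[of _ E] conjI allI impI)
    show "E \<subseteq> {..<a} \<times> {..<n}" by (rule E)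
    fix x assume "x < a"
    then show "card {y. (x, y) \<in> E} = nat \<lfloor>\<alpha> * real n\<rfloor>"
      using N row by (auto simp: PiE_iff Image_singleton)
  next
    fix \<delta> :: real and F
    assume \<delta>: "0 < \<delta> \<and> \<delta> \<le> 1 \<and> 10 * real a powr (-1/3) / \<alpha> \<le> \<delta>"
      and F: "F \<subseteq> E \<and> \<alpha> * \<delta> * real a * real n \<le> real (card F)"
    have "spread a n \<alpha> \<delta> (\<lambda>x. F `` {x})"
    proof (rule spread_subset)
      show "spread a n \<alpha> \<delta> N" using spread \<delta> by blast
      fix x assume "x < a"
      then show "F `` {x} \<subseteq> N x" using F row by blast
    qed
    then show "\<exists>A' B'. A' \<subseteq> {..<a} \<and> B' \<subseteq> {..<n} \<and> real (card A') \<le> 1 / \<alpha> \<and>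
        \<delta> * real n / 16 \<le> real (card B') \<and> induced_diam_le F A' B' 6"
      using exists_small_part_of_small_diameter[OF assms(1,2) _ assms(4)] \<delta> F E by blast
  qed
qed

end
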